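(* Let $A,B,C,D$ be real random variables on a common probability space with finite second moments, $\mathrm{Var}(B)>0$, $\mathrm{Var}(D)>0$, $|\mathrm{Corr}(B,D)|<1$, $\mathbb{E}[A]\neq0$, $\mathbb{E}[C]\neq 0$, and set $R=\mathbb{E}[A]/\mathbb{E}[C]$. Let $n\ge1$ and let $(A_i,B_i,C_i,D_i)_{i=1,\dots,n}$ be i.i.d. copies of $(A,B,C,D)$. For $\alpha,\beta\in\mathbb{R}$ put $N_\alpha=\overline{A_n}+\alpha(\mathbb{E}[B]-\overline{B_n})$ and $M_\beta=\overline{C_n}+\beta(\mathbb{E}[D]-\overline{D_n})$. Let $$\alpha_o=\frac{\mathrm{Var}(D)\mathrm{Cov}(A,B)-R\,\mathrm{Var}(D)\mathrm{Cov}(B,C)+R\,\mathrm{Cov}(B,D)\mathrm{Cov}(C,D)-\mathrm{Cov}(B,D)\mathrm{Cov}(A,D)}{\mathrm{Var}(B)\mathrm{Var}(D)-\mathrm{Cov}(B,D)^2},$$ $$\beta_o=\frac{\mathrm{Cov}(B,D)\mathrm{Cov}(A,B)-R\,\mathrm{Cov}(B,D)\mathrm{Cov}(B,C)+R\,\mathrm{Var}(B)\mathrm{Cov}(C,D)-\mathrm{Var}(B)\mathrm{Cov}(A,D)}{R\big(\mathrm{Var}(B)\mathrm{Var}(D)-\mathrm{Cov}(B,D)^2\big)}.$$ Then $$\Phi(N_{\alpha_o},M_{\beta_o})-\Phi(\overline{A_n},\overline{C_n})=-\frac{1}{n\,\mathbb{E}[C]^2}\,\frac{\mathrm{Var}\Big(\big(R\,\mathrm{Cov}(B,C)-\mathrm{Cov}(A,B)\big)D-\big(R\,\mathrm{Cov}(C,D)-\mathrm{Cov}(A,D)\big)B\Big)}{\mathrm{Var}(B)\mathrm{Var}(D)-\mathrm{Cov}(B,D)^2}\le0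 .$$
   Context: For a random variable $X$, $\overline{X_n}=\frac1n\sum_{i=1}^n X_i$ denotes the sample mean of the i.i.d. copies $X_1,\dots,X_n$. For real random variables $X,Z$ with finite second moments and $\mathbb{E}[Z]\neq0$, define the first-order (delta-method) approximation of the variance of the ratio $X/Z$: $$\Phi(X,Z)=\frac{\mathrm{Var}(X)}{\mathbb{E}[Z]^2}+\frac{\mathbb{E}[X]^2}{\mathbb{E}[Z]^4}\mathrm{Var}(Z)-2\frac{\mathbb{E}[X]}{\mathbb{E}[Z]^3}\mathrm{Cov}(X,Z).$$ $\Phi(N_\alpha,M_\beta)$ is the paper's variance of the CV/CV ratio estimator $N_\alpha/M_\beta$ of $R$, and $\Phi(\overline{A_n},\overline{C_n})$ that of the Monte Carlo ratio estimator $\overline{A_n}/\overline{C_n}$; $\mathbb{E}[B],\mathbb{E}[D]$ are known constants. $\mathrm{Corr}(B,D)=\mathrm{Cov}(B,D)/\sqrt{\mathrm{Var}(B)\mathrm{Var}(D)}$. *)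

theory Defs
  imports "HOL-Probability.Probability"
begin

definition (in prob_space) cov :: "('a \<Rightarrow> real) \<Rightarrow> ('a \<Rightarrow> real) \<Rightarrow> real" where
  "cov X Z = expectation (\<lambda>x. (X x - expectation X) * (Z x - expectation Z))"

definition (in prob_space) corr :: "('a \<Rightarrow> real) \<Rightarrow> ('a \<Rightarrow> real) \<Rightarrow> real" where
  "corr X Z = cov X Z / sqrt (variance X * variance Z)"

text \<open>First-order (delta-method) variance approximation of the ratio X/Z.\<close>
definition (in prob_space) Phi :: "('a \<Rightarrow> real) \<Rightarrow> ('a \<Rightarrow> real) \<Rightarrow> real" where
  "Phi X Z = variance X / (expectation Z)^2
     + (expectation X)^2 / (expectation Z)^4 * variance Z
     - 2 * expectation X / (expectation Z)^3 * cov X Z"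

definition sample_mean :: "nat \<Rightarrow> (nat \<Rightarrow> 'a \<Rightarrow> real) \<Rightarrow> 'a \<Rightarrow> real" where
  "sample_mean n X = (\<lambda>\<omega>. (\<Sum>i=1..n. X i \<omega>) / real n)"

end

theory Submission
  imports Defs
begin

text \<open>
  The delta-method variance of a ratio is a rescaled variance of its linearisation:
  \<open>Phi X Z = Var(X - r Z) / (E Z)\<^sup>2\<close> with \<open>r = E X / E Z\<close>. The estimators
  \<open>N \<alpha>\<close> and \<open>Mb \<beta>\<close> have means \<open>E A\<close> and \<open>E C\<close>, and \<open>N \<alpha> - R Mb \<beta>\<close> is, up to a
  constant, the sample mean of \<open>n\<close> i.i.d. copies of \<open>Y - \<alpha> B + R \<beta> D\<close> with \<open>Y = A - R C\<close>;
  hence \<open>n (E C)\<^sup>2 Phi (N \<alpha>) (Mb \<beta>) = Var(Y - \<alpha> B + R \<beta> D)\<close>, and \<open>\<alpha> = \<beta> = 0\<close> gives the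
  plain Monte Carlo estimator. The coefficients \<open>\<alpha>o\<close> and \<open>-R \<beta>o\<close> solve the normal equations
  of the least-squares regression of \<open>Y\<close> on \<open>(B, D)\<close>, whose determinant
  \<open>\<Delta> = Var B Var D - Cov(B, D)\<^sup>2\<close> is positive because \<open>|Corr(B, D)| < 1\<close>. At the solution the
  residual variance is \<open>Var Y - Var(Cov(Y, D) B - Cov(Y, B) D) / \<Delta>\<close>, which is the claim.
\<close>

definition square_integrable :: "'a measure \<Rightarrow> ('a \<Rightarrow> real) \<Rightarrow> bool" where
  "square_integrable M X \<longleftrightarrow> X \<in> borel_measurable M \<and> integrable M (\<lambda>x. (X x)\<^sup>2)"

lemma integrable_mult_if_square_integrable:
  assumes "square_integrable M X" "square_integrable M Y"
  shows "integrable M (\<lambda>x. X x * Y x)"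
proof (rule Bochner_Integration.integrable_bound)
  show "integrable M (\<lambda>x. (X x)\<^sup>2 + (Y x)\<^sup>2)"
    using assms by (simp add: square_integrable_def)
  show "(\<lambda>x. X x * Y x) \<in> borel_measurable M"
    using assms by (simp add: square_integrable_def borel_measurable_times)
  have "\<bar>u * v\<bar> \<le> u\<^sup>2 + v\<^sup>2" for u v :: real
    using sum_squares_bound[of "\<bar>u\<bar>" "\<bar>v\<bar>"] abs_ge_zero[of "u * v"]
    unfolding abs_mult power2_abs by linarith
  then show "AE x in M. norm (X x * Y x) \<le> norm ((X x)\<^sup>2 + (Y x)\<^sup>2)"
    by simp
qed

lemma square_integrable_add [simp]:
  assumes "square_integrable M X" "square_integrable M Y"
  shows "square_integrable M (\<lambda>x. X x + Y x)"
proof -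
  have "integrable M (\<lambda>x. (X x)\<^sup>2 + 2 * (X x * Y x) + (Y x)\<^sup>2)"
    using assms integrable_mult_if_square_integrable[OF assms]
    by (simp add: square_integrable_def)
  then show ?thesis
    using assms by (simp add: square_integrable_def power2_sum borel_measurable_add ac_simps)
qed

lemma square_integrable_cmult [simp]:
  "square_integrable M X \<Longrightarrow> square_integrable M (\<lambda>x. c * X x)"
  by (simp add: square_integrable_def power_mult_distrib borel_measurable_times)

lemma square_integrable_diff [simp]:
  assumes "square_integrable M X" "square_integrable M Y"
  shows "square_integrable M (\<lambda>x. X x - Y x)"
  using square_integrable_add[OF assms(1) square_integrable_cmult[OF assms(2), of "-1"]] by simp

lemma (in finite_measure) square_integrable_const [simp]: "square_integrable M (\<lambda>_. c)"
  by (simp add: square_integrable_def)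

lemma square_integrable_sum [simp]:
  "(\<And>i. i \<in> I \<Longrightarrow> square_integrable M (X i)) \<Longrightarrow> square_integrable M (\<lambda>x. \<Sum>i\<in>I. X i x)"
  by (induction I rule: infinite_finite_induct) (simp_all add: square_integrable_def[of M "\<lambda>_. 0"])

lemma (in finite_measure) integrable_if_square_integrable:
  "square_integrable M X \<Longrightarrow> integrable M X"
  by (simp add: square_integrable_def square_integrable_imp_integrable)

lemma quadratic_at_normal_equations_solution:
  fixes bb bd dd yb yd a c \<Delta> :: real
  assumes \<Delta>: "\<Delta> = bb * dd - bd\<^sup>2" "\<Delta> \<noteq> 0"
    and a: "a = (dd * yb - bd * yd) / \<Delta>" and c: "c = (bb * yd - bd * yb) / \<Delta>"
  shows "a\<^sup>2 * bb + 2 * a * c * bd + c\<^sup>2 * dd - 2 * a * yb - 2 * c * yd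
       = - ((yd\<^sup>2 * bb - 2 * yd * yb * bd + yb\<^sup>2 * dd) / \<Delta>)"
proof -
  have normal1: "bb * a + bd * c = yb" and normal2: "bd * a + dd * c = yd"
    using \<Delta>(2) unfolding a c
    by (simp_all add: field_simps) (simp_all add: \<Delta>(1) power2_eq_square algebra_simps)
  have "a\<^sup>2 * bb + 2 * a * c * bd + c\<^sup>2 * dd - 2 * a * yb - 2 * c * yd
      = a * (bb * a + bd * c) + c * (bd * a + dd * c) - 2 * a * yb - 2 * c * yd"
    by (simp add: power2_eq_square algebra_simps)
  also have "\<dots> = - (a * yb + c * yd)"
    unfolding normal1 normal2 by simp
  also have "\<dots> = - ((yd\<^sup>2 * bb - 2 * yd * yb * bd + yb\<^sup>2 * dd) / \<Delta>)"
    using \<Delta>(2) unfolding a c by (simp add: field_simps power2_eq_square)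
  finally show ?thesis .
qed

context prob_space
begin

lemma cov_commute: "cov X Y = cov Y X"
  by (simp add: cov_def mult.commute)

lemma variance_eq_cov: "variance X = cov X X"
  by (simp add: cov_def power2_eq_square)

lemma cov_cmult_left: "cov (\<lambda>x. c * X x) Y = c * cov X Y"
  by (simp add: cov_def mult.assoc flip: right_diff_distrib)

lemma cov_cmult_right: "cov X (\<lambda>x. c * Y x) = c * cov X Y"
  by (simp add: cov_commute[of X] cov_cmult_left)

lemma cov_const_left: "cov (\<lambda>_. c) Y = 0"
  by (simp add: cov_def prob_space)

lemma cov_const_right: "cov X (\<lambda>_. c) = 0"
  by (simp add: cov_commute[of X] cov_const_left)

lemma cov_add_left:
  assumes X: "square_integrable M X" and Y: "square_integrable M Y" and Z: "square_integrable M Z"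
  shows "cov (\<lambda>x. X x + Y x) Z = cov X Z + cov Y Z"
proof -
  have mean: "expectation (\<lambda>x. X x + Y x) = expectation X + expectation Y"
    using X Y by (simp add: integrable_if_square_integrable)
  have "cov (\<lambda>x. X x + Y x) Z = expectation (\<lambda>x.
      (X x - expectation X) * (Z x - expectation Z) + (Y x - expectation Y) * (Z x - expectation Z))"
    unfolding cov_def mean by (simp add: algebra_simps)
  also have "\<dots> = cov X Z + cov Y Z"
    unfolding cov_def using X Y Z
    by (intro Bochner_Integration.integral_add integrable_mult_if_square_integrable) auto
  finally show ?thesis .
qed

lemma cov_add_right:
  "square_integrable M X \<Longrightarrow> square_integrable M Y \<Longrightarrow> square_integrable M Z \<Longrightarrow>
    cov X (\<lambda>x. Y x + Z x) = cov X Y + cov X Z"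
  by (simp add: cov_commute[of X] cov_add_left)

lemma cov_diff_left:
  assumes X: "square_integrable M X" and Y: "square_integrable M Y" and Z: "square_integrable M Z"
  shows "cov (\<lambda>x. X x - Y x) Z = cov X Z - cov Y Z"
proof -
  have mean: "expectation (\<lambda>x. X x - Y x) = expectation X - expectation Y"
    using X Y by (simp add: integrable_if_square_integrable)
  have "cov (\<lambda>x. X x - Y x) Z = expectation (\<lambda>x.
      (X x - expectation X) * (Z x - expectation Z) - (Y x - expectation Y) * (Z x - expectation Z))"
    unfolding cov_def mean by (simp add: algebra_simps)
  also have "\<dots> = cov X Z - cov Y Z"
    unfolding cov_def using X Y Z
    by (intro Bochner_Integration.integral_diff integrable_mult_if_square_integrable) auto
  finally show ?thesis .
qed

lemma cov_diff_right:
  "square_integrable M X \<Longrightarrow> square_integrable M Y \<Longrightarrow> square_integrable M Z \<Longrightarrow>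
    cov X (\<lambda>x. Y x - Z x) = cov X Y - cov X Z"
  by (simp add: cov_commute[of X] cov_diff_left)

lemmas cov_bilinear = cov_add_left cov_add_right cov_diff_left cov_diff_right
  cov_cmult_left cov_cmult_right cov_const_left cov_const_right

lemma indep_var_if_indep_vars:
  assumes "indep_vars M' X I" "i \<in> I" "j \<in> I" "i \<noteq> j"
  shows "indep_var (M' i) (X i) (M' j) (X j)"
proof -
  have "indep_var (Pi\<^sub>M {i} M') (\<lambda>\<omega>. restrict (\<lambda>k. X k \<omega>) {i})
                  (Pi\<^sub>M {j} M') (\<lambda>\<omega>. restrict (\<lambda>k. X k \<omega>) {j})"
    using assms by (intro indep_var_restrict) auto
  then have "indep_var (M' i) ((\<lambda>f. f i) \<circ> (\<lambda>\<omega>. restrict (\<lambda>k. X k \<omega>) {i}))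
                       (M' j) ((\<lambda>f. f j) \<circ> (\<lambda>\<omega>. restrict (\<lambda>k. X k \<omega>) {j}))"
    by (rule indep_var_compose) (auto intro: measurable_component_singleton)
  then show ?thesis
    by (simp add: comp_def)
qed

lemma cov_eq_0_if_indep_var:
  assumes indep: "indep_var borel X borel Y"
    and X: "square_integrable M X" and Y: "square_integrable M Y"
  shows "cov X Y = 0"
proof -
  let ?X' = "\<lambda>x. X x - expectation X" and ?Y' = "\<lambda>x. Y x - expectation Y"
  have "indep_var borel ((\<lambda>u. u - expectation X) \<circ> X) borel ((\<lambda>u. u - expectation Y) \<circ> Y)"
    using indep by (rule indep_var_compose) auto
  then have "indep_var borel ?X' borel ?Y'"
    by (simp add: comp_def)
  then have "cov X Y = expectation ?X' * expectation ?Y'"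
    unfolding cov_def using X Y
    by (intro indep_var_lebesgue_integral) (auto simp: integrable_if_square_integrable)
  also have "expectation ?X' = 0"
    using X by (simp add: integrable_if_square_integrable prob_space)
  finally show ?thesis by simp
qed

lemma cov_sum_left:
  "(\<And>i. i \<in> I \<Longrightarrow> square_integrable M (X i)) \<Longrightarrow> square_integrable M Z \<Longrightarrow>
    cov (\<lambda>x. \<Sum>i\<in>I. X i x) Z = (\<Sum>i\<in>I. cov (X i) Z)"
  by (induction I rule: infinite_finite_induct) (simp_all add: cov_const_left cov_add_left)

lemma cov_sum_right:
  "(\<And>i. i \<in> I \<Longrightarrow> square_integrable M (Y i)) \<Longrightarrow> square_integrable M X \<Longrightarrow>
    cov X (\<lambda>x. \<Sum>i\<in>I. Y i x) = (\<Sum>i\<in>I. cov X (Y i))"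
  by (simp add: cov_commute[of X] cov_sum_left)

lemma variance_sum_uncorrelated:
  assumes "finite I" and sq: "\<And>i. i \<in> I \<Longrightarrow> square_integrable M (X i)"
    and uncorrelated: "\<And>i j. i \<in> I \<Longrightarrow> j \<in> I \<Longrightarrow> i \<noteq> j \<Longrightarrow> cov (X i) (X j) = 0"
  shows "variance (\<lambda>x. \<Sum>i\<in>I. X i x) = (\<Sum>i\<in>I. variance (X i))"
proof -
  have "variance (\<lambda>x. \<Sum>i\<in>I. X i x) = (\<Sum>i\<in>I. \<Sum>j\<in>I. cov (X i) (X j))"
    using sq by (simp add: variance_eq_cov cov_sum_left cov_sum_right)
  also have "\<dots> = (\<Sum>i\<in>I. cov (X i) (X i))"
  proof (rule sum.cong)
    fix i assume "i \<in> I"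
    then show "(\<Sum>j\<in>I. cov (X i) (X j)) = cov (X i) (X i)"
      using \<open>finite I\<close> uncorrelated by (simp add: sum.remove) (auto intro!: sum.neutral)
  qed simp
  finally show ?thesis
    by (simp add: variance_eq_cov)
qed

lemma variance_cmult:
  fixes X :: "'a \<Rightarrow> real"
  shows "variance (\<lambda>x. c * X x) = c\<^sup>2 * variance X"
  by (simp add: power_mult_distrib flip: right_diff_distrib)

lemma variance_add_const:
  fixes X :: "'a \<Rightarrow> real"
  shows "integrable M X \<Longrightarrow> variance (\<lambda>x. X x + c) = variance X"
  by (simp add: prob_space)

(* No hypothesis on expectation Z is needed: if it is 0, both sides are 0 since x / 0 = 0. *)
lemma Phi_eq_variance:
  assumes X: "square_integrable M X" and Z: "square_integrable M Z"
  shows "Phi X Z = variance (\<lambda>x. X x - expectation X / expectation Z * Z x) / (expectation Z)\<^sup>2"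
proof -
  define r where "r = expectation X / expectation Z"
  have var: "variance (\<lambda>x. X x - r * Z x) = variance X - 2 * r * cov X Z + r\<^sup>2 * variance Z"
    unfolding variance_eq_cov using X Z
    by (simp add: cov_bilinear) (simp add: cov_commute[of Z X] power2_eq_square algebra_simps)
  have "v / z\<^sup>2 + e\<^sup>2 / z ^ 4 * w - 2 * e / z ^ 3 * c = (v - 2 * (e / z) * c + (e / z)\<^sup>2 * w) / z\<^sup>2"
    for v w c e z :: real
    by (cases "z = 0") (simp_all add: field_simps power2_eq_square power4_eq_xxxx power3_eq_cube)
  then show ?thesis
    by (simp only: Phi_def flip: r_def var)
qed

lemma cov_sq_less_if_abs_corr_less:
  assumes pos: "0 < variance X * variance Y" and corr: "\<bar>corr X Y\<bar> < 1"
  shows "(cov X Y)\<^sup>2 < variance X * variance Y"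
proof -
  have "\<bar>cov X Y\<bar> < sqrt (variance X * variance Y)"
    using corr pos by (simp add: corr_def abs_divide divide_less_eq)
  then show ?thesis
    using pos by (metis abs_ge_zero real_sqrt_abs real_sqrt_less_iff)
qed

lemma variance_least_squares_residual:
  assumes Y: "square_integrable M Y" and B: "square_integrable M B" and D: "square_integrable M D"
    and \<Delta>: "\<Delta> = variance B * variance D - (cov B D)\<^sup>2" "\<Delta> \<noteq> 0"
    and a: "a = (variance D * cov Y B - cov B D * cov Y D) / \<Delta>"
    and c: "c = (variance B * cov Y D - cov B D * cov Y B) / \<Delta>"
  shows "variance (\<lambda>x. Y x - a * B x - c * D x)
       = variance Y - variance (\<lambda>x. cov Y D * B x - cov Y B * D x) / \<Delta>"
proof -
  have "variance (\<lambda>x. Y x - a * B x - c * D x) = variance Y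
      + (a\<^sup>2 * variance B + 2 * a * c * cov B D + c\<^sup>2 * variance D - 2 * a * cov Y B - 2 * c * cov Y D)"
    unfolding variance_eq_cov using Y B D
    by (simp add: cov_bilinear)
       (simp add: cov_commute[of B Y] cov_commute[of D Y] cov_commute[of D B] power2_eq_square algebra_simps)
  moreover have "variance (\<lambda>x. cov Y D * B x - cov Y B * D x)
      = (cov Y D)\<^sup>2 * variance B - 2 * cov Y D * cov Y B * cov B D + (cov Y B)\<^sup>2 * variance D"
    unfolding variance_eq_cov using B D
    by (simp add: cov_bilinear) (simp add: cov_commute[of D B] power2_eq_square algebra_simps)
  ultimately show ?thesis
    using quadratic_at_normal_equations_solution[OF \<Delta> a c] by simp
qed

lemma variance_ratio_residual_at_optimum:
  assumes sq: "square_integrable M A" "square_integrable M B" "square_integrable M C" "square_integrable M D"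
    and R: "R \<noteq> 0" and \<Delta>: "\<Delta> = variance B * variance D - (cov B D)\<^sup>2" "\<Delta> \<noteq> 0"
    and \<alpha>: "\<alpha> = (variance D * cov A B - R * variance D * cov B C + R * cov B D * cov C D
                - cov B D * cov A D) / \<Delta>"
    and \<beta>: "\<beta> = (cov B D * cov A B - R * cov B D * cov B C + R * variance B * cov C D
                - variance B * cov A D) / (R * \<Delta>)"
  shows "variance (\<lambda>\<omega>. A \<omega> - \<alpha> * B \<omega> - R * (C \<omega> - \<beta> * D \<omega>))
       = variance (\<lambda>\<omega>. A \<omega> - R * C \<omega>)
         - variance (\<lambda>\<omega>. (R * cov B C - cov A B) * D \<omega> - (R * cov C D - cov A D) * B \<omega>) / \<Delta>"
proof -
  define Y where "Y = (\<lambda>\<omega>. A \<omega> - R * C \<omega>)"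
  have sqY: "square_integrable M Y"
    unfolding Y_def using sq by simp
  have covYB: "cov Y B = cov A B - R * cov B C" and covYD: "cov Y D = cov A D - R * cov C D"
    unfolding Y_def using sq by (simp_all add: cov_bilinear cov_commute[of C B])
  have remainder: "variance (\<lambda>\<omega>. cov Y D * B \<omega> - cov Y B * D \<omega>)
      = variance (\<lambda>\<omega>. (R * cov B C - cov A B) * D \<omega> - (R * cov C D - cov A D) * B \<omega>)"
    by (rule arg_cong[where f = "\<lambda>X. variance X"]) (simp add: covYB covYD fun_eq_iff algebra_simps)
  have "variance (\<lambda>\<omega>. A \<omega> - \<alpha> * B \<omega> - R * (C \<omega> - \<beta> * D \<omega>))
      = variance (\<lambda>\<omega>. Y \<omega> - \<alpha> * B \<omega> - (- R * \<beta>) * D \<omega>)"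
    by (rule arg_cong[where f = "\<lambda>X. variance X"]) (simp add: Y_def fun_eq_iff algebra_simps)
  also have "\<dots> = variance Y - variance (\<lambda>\<omega>. cov Y D * B \<omega> - cov Y B * D \<omega>) / \<Delta>"
  proof (rule variance_least_squares_residual[OF sqY sq(2,4) \<Delta>])
    show "\<alpha> = (variance D * cov Y B - cov B D * cov Y D) / \<Delta>"
      unfolding \<alpha> covYB covYD by (simp add: algebra_simps)
    have cancel_R: "- R * (x / (R * \<Delta>)) = (- x) / \<Delta>" for x
      using R by simp
    show "- R * \<beta> = (variance B * cov Y D - cov B D * cov Y B) / \<Delta>"
      unfolding \<beta> cancel_R
      by (rule arg_cong[where f = "\<lambda>x. x / \<Delta>"]) (simp add: covYB covYD algebra_simps)
  qed
  also have "\<dots> = variance (\<lambda>\<omega>. A \<omega> - R * C \<omega>)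
      - variance (\<lambda>\<omega>. (R * cov B C - cov A B) * D \<omega> - (R * cov C D - cov A D) * B \<omega>) / \<Delta>"
    unfolding remainder by (simp add: Y_def)
  finally show ?thesis .
qed

end

lemma sample_mean_diff:
  "sample_mean n (\<lambda>i x. X i x - Y i x) = (\<lambda>x. sample_mean n X x - sample_mean n Y x)"
  by (simp add: sample_mean_def sum_subtractf diff_divide_distrib)

lemma sample_mean_cmult:
  "sample_mean n (\<lambda>i x. c * X i x) = (\<lambda>x. c * sample_mean n X x)"
  by (simp add: sample_mean_def sum_distrib_left)

lemma square_integrable_sample_mean:
  assumes "\<And>i. i \<in> {1..n} \<Longrightarrow> square_integrable M (X i)"
  shows "square_integrable M (sample_mean n X)"
proof -
  have "square_integrable M (\<lambda>x. 1 / real n * (\<Sum>i=1..n. X i x))"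
    using assms by (intro square_integrable_cmult square_integrable_sum)
  then show ?thesis
    by (simp add: sample_mean_def)
qed

locale iid_copies = prob_space +
  fixes X :: "nat \<Rightarrow> 'a \<Rightarrow> 'b::topological_space" and X0 :: "'a \<Rightarrow> 'b" and n :: nat
  assumes random_variable_copy: "\<And>i. i \<in> {1..n} \<Longrightarrow> X i \<in> borel_measurable M"
    and random_variable_X0: "X0 \<in> borel_measurable M"
    and indep_copies: "indep_vars (\<lambda>_. borel) X {1..n}"
    and distr_copy: "\<And>i. i \<in> {1..n} \<Longrightarrow> distr M borel (X i) = distr M borel X0"
begin

lemma expectation_copy:
  fixes h :: "'b \<Rightarrow> real"
  assumes i: "i \<in> {1..n}" and h: "h \<in> borel_measurable borel"
  shows "expectation (\<lambda>x. h (X i x)) = expectation (\<lambda>x. h (X0 x))"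
proof -
  have "expectation (\<lambda>x. h (X i x)) = integral\<^sup>L (distr M borel (X i)) h"
    using integral_distr[OF random_variable_copy[OF i] h] by simp
  also have "\<dots> = expectation (\<lambda>x. h (X0 x))"
    using integral_distr[OF random_variable_X0 h] by (simp add: distr_copy[OF i])
  finally show ?thesis .
qed

lemma integrable_copy_iff:
  fixes h :: "'b \<Rightarrow> real"
  assumes i: "i \<in> {1..n}" and h: "h \<in> borel_measurable borel"
  shows "integrable M (\<lambda>x. h (X i x)) \<longleftrightarrow> integrable M (\<lambda>x. h (X0 x))"
proof -
  have "integrable M (\<lambda>x. h (X i x)) \<longleftrightarrow> integrable (distr M borel (X i)) h"
    using integrable_distr_eq[OF random_variable_copy[OF i] h] by simp
  also have "\<dots> \<longleftrightarrow> integrable M (\<lambda>x. h (X0 x))"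
    using integrable_distr_eq[OF random_variable_X0 h] by (simp add: distr_copy[OF i])
  finally show ?thesis .
qed

lemma square_integrable_copy:
  assumes "i \<in> {1..n}" and [measurable]: "F \<in> borel_measurable borel"
    and "square_integrable M (\<lambda>x. F (X0 x))"
  shows "square_integrable M (\<lambda>x. F (X i x))"
  using assms random_variable_copy integrable_copy_iff[of i "\<lambda>t. (F t)\<^sup>2"]
  by (simp add: square_integrable_def)

lemma cov_copies_eq_0:
  assumes "i \<in> {1..n}" "j \<in> {1..n}" "i \<noteq> j" and [measurable]: "F \<in> borel_measurable borel"
    and "square_integrable M (\<lambda>x. F (X0 x))"
  shows "cov (\<lambda>x. F (X i x)) (\<lambda>x. F (X j x)) = 0"
proof (rule cov_eq_0_if_indep_var)
  have "indep_var borel (F \<circ> X i) borel (F \<circ> X j)"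
    using indep_var_if_indep_vars[OF indep_copies assms(1-3)] by (rule indep_var_compose) simp_all
  then show "indep_var borel (\<lambda>x. F (X i x)) borel (\<lambda>x. F (X j x))"
    by (simp add: comp_def)
qed (use assms square_integrable_copy in auto)

lemma expectation_sample_mean_copies:
  assumes "n \<ge> 1" and [measurable]: "F \<in> borel_measurable borel"
    and "integrable M (\<lambda>x. F (X0 x))"
  shows "expectation (sample_mean n (\<lambda>i x. F (X i x))) = expectation (\<lambda>x. F (X0 x))"
proof -
  have "expectation (sample_mean n (\<lambda>i x. F (X i x)))
      = (\<Sum>i=1..n. expectation (\<lambda>x. F (X i x))) / real n"
    unfolding sample_mean_def using assms integrable_copy_iff
    by (simp add: Bochner_Integration.integral_sum)
  also have "\<dots> = expectation (\<lambda>x. F (X0 x))"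
    using assms expectation_copy by simp
  finally show ?thesis .
qed

lemma variance_sample_mean_copies:
  assumes [measurable]: "F \<in> borel_measurable borel" and F: "square_integrable M (\<lambda>x. F (X0 x))"
  shows "variance (sample_mean n (\<lambda>i x. F (X i x))) = variance (\<lambda>x. F (X0 x)) / real n"
proof -
  have "variance (\<lambda>x. \<Sum>i=1..n. F (X i x)) = (\<Sum>i=1..n. variance (\<lambda>x. F (X i x)))"
    using F by (intro variance_sum_uncorrelated) (auto intro: square_integrable_copy cov_copies_eq_0)
  also have "\<dots> = real n * variance (\<lambda>x. F (X0 x))"
    using expectation_copy[of _ "\<lambda>t. (F t - expectation (\<lambda>x. F (X0 x)))\<^sup>2"] expectation_copy[of _ F]
    by simp
  finally show ?thesis
    using variance_cmult[of "1 / real n" "\<lambda>x. \<Sum>i=1..n. F (X i x)"]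
    by (simp add: sample_mean_def power2_eq_square)
qed

lemma Phi_control_variates:
  fixes F G H K :: "'b \<Rightarrow> real"
  assumes "n \<ge> 1"
    and [measurable]: "F \<in> borel_measurable borel" "G \<in> borel_measurable borel"
      "H \<in> borel_measurable borel" "K \<in> borel_measurable borel"
    and sq: "square_integrable M (\<lambda>x. F (X0 x))" "square_integrable M (\<lambda>x. G (X0 x))"
      "square_integrable M (\<lambda>x. H (X0 x))" "square_integrable M (\<lambda>x. K (X0 x))"
  defines "mean \<equiv> \<lambda>Q. sample_mean n (\<lambda>i x. Q (X i x))"
    and "r \<equiv> expectation (\<lambda>x. F (X0 x)) / expectation (\<lambda>x. G (X0 x))"
  shows "Phi (\<lambda>\<omega>. mean F \<omega> + \<alpha> * (expectation (\<lambda>x. H (X0 x)) - mean H \<omega>))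
             (\<lambda>\<omega>. mean G \<omega> + \<beta> * (expectation (\<lambda>x. K (X0 x)) - mean K \<omega>))
       = variance (\<lambda>x. F (X0 x) - \<alpha> * H (X0 x) - r * (G (X0 x) - \<beta> * K (X0 x)))
         / (real n * (expectation (\<lambda>x. G (X0 x)))\<^sup>2)"
proof -
  have sq_mean: "square_integrable M (mean Q)"
    if "Q \<in> borel_measurable borel" "square_integrable M (\<lambda>x. Q (X0 x))" for Q
    unfolding mean_def using that by (intro square_integrable_sample_mean square_integrable_copy)
  have expectation_mean: "expectation (mean Q) = expectation (\<lambda>x. Q (X0 x))"
    if "Q \<in> borel_measurable borel" "square_integrable M (\<lambda>x. Q (X0 x))" for Q
    unfolding mean_def using that \<open>n \<ge> 1\<close>
    by (intro expectation_sample_mean_copies integrable_if_square_integrable)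
  define W where "W t = F t - \<alpha> * H t - r * (G t - \<beta> * K t)" for t
  have [measurable]: "W \<in> borel_measurable borel"
    unfolding W_def by measurable
  have sqW: "square_integrable M (\<lambda>x. W (X0 x))"
    unfolding W_def using sq by simp
  let ?N = "\<lambda>\<omega>. mean F \<omega> + \<alpha> * (expectation (\<lambda>x. H (X0 x)) - mean H \<omega>)"
  let ?D = "\<lambda>\<omega>. mean G \<omega> + \<beta> * (expectation (\<lambda>x. K (X0 x)) - mean K \<omega>)"
  have "expectation ?N = expectation (\<lambda>x. F (X0 x))" "expectation ?D = expectation (\<lambda>x. G (X0 x))"
    using sq sq_mean expectation_mean by (simp_all add: integrable_if_square_integrable prob_space)
  then have "Phi ?N ?D = variance (\<lambda>\<omega>. ?N \<omega> - r * ?D \<omega>) / (expectation (\<lambda>x. G (X0 x)))\<^sup>2"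
    using sq sq_mean by (simp add: Phi_eq_variance r_def)
  also have "(\<lambda>\<omega>. ?N \<omega> - r * ?D \<omega>)
      = (\<lambda>\<omega>. mean W \<omega> + (\<alpha> * expectation (\<lambda>x. H (X0 x)) - r * \<beta> * expectation (\<lambda>x. K (X0 x))))"
    by (simp add: mean_def W_def sample_mean_diff sample_mean_cmult) (simp add: fun_eq_iff algebra_simps)
  also have "variance \<dots> = variance (mean W)"
    by (rule variance_add_const) (simp add: integrable_if_square_integrable sq_mean sqW)
  also have "\<dots> = variance (\<lambda>x. W (X0 x)) / real n"
    unfolding mean_def using sqW by (rule variance_sample_mean_copies[rotated]) simp
  finally show ?thesis
    by (simp add: W_def)
qed

end

theorem mainTheorem6:
  fixes M :: "'a measure"
    and A B C D :: "'a \<Rightarrow> real"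
    and As Bs Cs Ds :: "nat \<Rightarrow> 'a \<Rightarrow> real"
    and n :: nat
  assumes P: "prob_space M"
    and rvA: "A \<in> borel_measurable M" and rvB: "B \<in> borel_measurable M"
    and rvC: "C \<in> borel_measurable M" and rvD: "D \<in> borel_measurable M"
    and sqA: "integrable M (\<lambda>x. (A x)^2)" and sqB: "integrable M (\<lambda>x. (B x)^2)"
    and sqC: "integrable M (\<lambda>x. (C x)^2)" and sqD: "integrable M (\<lambda>x. (D x)^2)"
    and varB: "prob_space.variance M B > 0"
    and varD: "prob_space.variance M D > 0"
    and corrBD: "\<bar>prob_space.corr M B D\<bar> < 1"
    and EA: "prob_space.expectation M A \<noteq> 0"
    and EC: "prob_space.expectation M C \<noteq> 0"
    and n: "n \<ge> 1"
    and rvi: "\<And>i. i \<in> {1..n} \<Longrightarrow>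
                (\<lambda>\<omega>. (As i \<omega>, Bs i \<omega>, Cs i \<omega>, Ds i \<omega>)) \<in> borel_measurable M"
    and indep: "prob_space.indep_vars M (\<lambda>_. borel)
                  (\<lambda>i \<omega>. (As i \<omega>, Bs i \<omega>, Cs i \<omega>, Ds i \<omega>)) {1..n}"
    and ident: "\<And>i. i \<in> {1..n} \<Longrightarrow>
                  distr M borel (\<lambda>\<omega>. (As i \<omega>, Bs i \<omega>, Cs i \<omega>, Ds i \<omega>))
                  = distr M borel (\<lambda>\<omega>. (A \<omega>, B \<omega>, C \<omega>, D \<omega>))"
  defines "R \<equiv> prob_space.expectation M A / prob_space.expectation M C"
    and "N \<equiv> (\<lambda>\<alpha> \<omega>. sample_mean n As \<omega>
                + \<alpha> * (prob_space.expectation M B - sample_mean n Bs \<omega>))"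
    and "Mb \<equiv> (\<lambda>\<beta> \<omega>. sample_mean n Cs \<omega>
                + \<beta> * (prob_space.expectation M D - sample_mean n Ds \<omega>))"
    and "\<Delta> \<equiv> prob_space.variance M B * prob_space.variance M D - (prob_space.cov M B D)^2"
    and "\<alpha>o \<equiv> (prob_space.variance M D * prob_space.cov M A B
               - (prob_space.expectation M A / prob_space.expectation M C) * prob_space.variance M D * prob_space.cov M B C
               + (prob_space.expectation M A / prob_space.expectation M C) * prob_space.cov M B D * prob_space.cov M C D
               - prob_space.cov M B D * prob_space.cov M A D) / (prob_space.variance M B * prob_space.variance M D - (prob_space.cov M B D)^2)"
    and "\<beta>o \<equiv> (prob_space.cov M B D * prob_space.cov M A B
               - (prob_space.expectation M A / prob_space.expectation M C) * prob_space.cov M B D * prob_space.cov M B C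
               + (prob_space.expectation M A / prob_space.expectation M C) * prob_space.variance M B * prob_space.cov M C D
               - prob_space.variance M B * prob_space.cov M A D) / ((prob_space.expectation M A / prob_space.expectation M C) * (prob_space.variance M B * prob_space.variance M D - (prob_space.cov M B D)^2))"
  shows "prob_space.Phi M (N \<alpha>o) (Mb \<beta>o) - prob_space.Phi M (sample_mean n As) (sample_mean n Cs)
           = - (1 / (real n * (prob_space.expectation M C)^2))
             * (prob_space.variance M (\<lambda>\<omega>.
                   ((prob_space.expectation M A / prob_space.expectation M C) * prob_space.cov M B C - prob_space.cov M A B) * D \<omega>
                 - ((prob_space.expectation M A / prob_space.expectation M C) * prob_space.cov M C D - prob_space.cov M A D) * B \<omega>) / (prob_space.variance M B * prob_space.variance M D - (prob_space.cov M B D)^2))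
         \<and> - (1 / (real n * (prob_space.expectation M C)^2))
             * (prob_space.variance M (\<lambda>\<omega>.
                   ((prob_space.expectation M A / prob_space.expectation M C) * prob_space.cov M B C - prob_space.cov M A B) * D \<omega>
                 - ((prob_space.expectation M A / prob_space.expectation M C) * prob_space.cov M C D - prob_space.cov M A D) * B \<omega>) / (prob_space.variance M B * prob_space.variance M D - (prob_space.cov M B D)^2)) \<le> 0"
proof -
  interpret prob_space M by (rule P)
  define T0 where "T0 = (\<lambda>\<omega>. (A \<omega>, B \<omega>, C \<omega>, D \<omega>))"
  interpret iid_copies M "\<lambda>i \<omega>. (As i \<omega>, Bs i \<omega>, Cs i \<omega>, Ds i \<omega>)" T0 n
    using rvi indep ident rvA rvB rvC rvD by unfold_locales (simp_all add: T0_def)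
  have sq: "square_integrable M A" "square_integrable M B" "square_integrable M C" "square_integrable M D"
    using rvA rvB rvC rvD sqA sqB sqC sqD by (simp_all add: square_integrable_def)
  have [measurable]: "fst \<in> borel_measurable borel" "(\<lambda>t. fst (snd t)) \<in> borel_measurable borel"
    "(\<lambda>t. fst (snd (snd t))) \<in> borel_measurable borel"
    "(\<lambda>t. snd (snd (snd t))) \<in> borel_measurable (borel :: (real \<times> real \<times> real \<times> real) measure)"
    by (auto intro!: borel_measurable_continuous_onI continuous_intros)
  have Phi_estimator: "Phi (N \<alpha>) (Mb \<beta>)
      = variance (\<lambda>\<omega>. A \<omega> - \<alpha> * B \<omega> - R * (C \<omega> - \<beta> * D \<omega>)) / (real n * (expectation C)\<^sup>2)" for \<alpha> \<beta>
    using Phi_control_variates[of fst "\<lambda>t. fst (snd (snd t))" "\<lambda>t. fst (snd t)" "\<lambda>t. snd (snd (snd t))" \<alpha> \<beta>]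
      n sq by (simp add: N_def Mb_def T0_def R_def)
  have R: "R \<noteq> 0"
    using EA EC by (simp add: R_def)
  have \<Delta>: "0 < \<Delta>"
    using cov_sq_less_if_abs_corr_less[of B D] varB varD corrBD by (simp add: \<Delta>_def)
  have "variance (\<lambda>\<omega>. A \<omega> - \<alpha>o * B \<omega> - R * (C \<omega> - \<beta>o * D \<omega>))
      = variance (\<lambda>\<omega>. A \<omega> - R * C \<omega>)
        - variance (\<lambda>\<omega>. (R * cov B C - cov A B) * D \<omega> - (R * cov C D - cov A D) * B \<omega>) / \<Delta>"
    using \<Delta> by (intro variance_ratio_residual_at_optimum[OF sq R meta_eq_to_obj_eq[OF \<Delta>_def]]
        meta_eq_to_obj_eq[OF \<alpha>o_def[folded R_def \<Delta>_def]] meta_eq_to_obj_eq[OF \<beta>o_def[folded R_def \<Delta>_def]])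
      simp
  moreover have "Phi (sample_mean n As) (sample_mean n Cs)
      = variance (\<lambda>\<omega>. A \<omega> - R * C \<omega>) / (real n * (expectation C)\<^sup>2)"
    using Phi_estimator[of 0 0] by (simp add: N_def Mb_def)
  moreover have "0 \<le> variance (\<lambda>\<omega>. (R * cov B C - cov A B) * D \<omega> - (R * cov C D - cov A D) * B \<omega>)
                     / (real n * (expectation C)\<^sup>2 * \<Delta>)"
    using \<Delta> by (intro divide_nonneg_nonneg mult_nonneg_nonneg) simp_all
  ultimately show ?thesis
    unfolding R_def[symmetric] \<Delta>_def[symmetric] Phi_estimator
    by (simp add: diff_divide_distrib)
qed

end
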